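(* Let $\mathcal{H}_1,\mathcal{H}_2$ be finite-dimensional Hilbert spaces, $m$ a positive integer, and $\mathcal{O}^{(\mathrm{CP})}_{\mathrm{F}}(\mathcal{H}_1\to\mathcal{H}_2)\subseteq\mathcal{O}^{(\mathrm{CP})}(\mathcal{H}_1\to\mathcal{H}_2)$ a set of free completely positive trace-nonincreasing maps. Let $(\mathcal{E}_i)_{i=0}^{m-1}\in\mathcal{O}^{(m)}(\mathcal{H}_1\to\mathcal{H}_2)$ be a quantum instrument. Let $\mathcal{H}_3$ be an $m$-dimensional Hilbert space with orthonormal basis $\{|i\rangle\}_{i=0}^{m-1}$, and for an instrument $(\mathcal{E}_i)_i$ define the channel $\Lambda_{(\mathcal{E}_i)_i}\in\mathcal{O}(\mathcal{H}_1\to\mathcal{H}_3\otimes\mathcal{H}_2)$ by $\Lambda_{(\mathcal{E}_i)_i}(\rho)=\sum_{i=0}^{m-1}|i\rangle\langle i|\otimes\mathcal{E}_i(\rho)$. Let \[\mathcal{O}_{\mathrm{F}}=\Big\{\Lambda_{(\mathcal{E}'_i)_i}:\ \mathcal{E}'_i\in\mathcal{O}^{(\mathrm{CP})}_{\mathrm{F}}(\mathcal{H}_1\to\mathcal{H}_2)\ \forall i,\ \textstyle\sum_{i=0}^{m-1}\mathcal{E}'_i\in\mathcal{O}(\mathcal{H}_1\to\mathcal{H}_2)\Big\}.\] Then $R_{\mathcal{O}^{(\mathrm{CP})}_{\mathrm{F}}}((\mathcal{E}_i)_i)=R_{\mathcal{O}_{\mathrm{F}}}(\Lambda_{(\mathc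al{E}_i)_i})$.
   Context: $\mathcal{O}(\mathcal{H}\to\mathcal{K})$ denotes quantum channels (CPTP maps) and $\mathcal{O}^{(\mathrm{CP})}(\mathcal{H}\to\mathcal{K})$ completely positive trace-nonincreasing maps. A quantum instrument with $m$ elements is a family $(\mathcal{E}_i)_{i=0}^{m-1}$ of maps in $\mathcal{O}^{(\mathrm{CP})}(\mathcal{H}_1\to\mathcal{H}_2)$ with $\sum_i\mathcal{E}_i\in\mathcal{O}(\mathcal{H}_1\to\mathcal{H}_2)$; the set of these is $\mathcal{O}^{(m)}(\mathcal{H}_1\to\mathcal{H}_2)$. Generalized robustness of an instrument: $R_{\mathcal{O}^{(\mathrm{CP})}_{\mathrm{F}}}((\mathcal{E}_i)_i)=\min\{s\ge0:\exists(\mathcal{G}_i)_i\in\mathcal{O}^{(m)}(\mathcal{H}_1\to\mathcal{H}_2),\ \frac{\mathcal{E}_i+s\mathcal{G}_i}{1+s}\in\mathcal{O}^{(\mathrm{CP})}_{\mathrm{F}}(\mathcal{H}_1\to\mathcal{H}_2)\ \forall i\}$. Generalized robustness of a channel $\Lambda$ with respect to a set $\mathcal{G}$ of channels from $\mathcal{H}_1$ to $\mathcal{H}_3\otimes\mathcal{H}_2$: $R_{\mathcal{G}}(\Lambda)=\min\{s\ge0:\exists\Theta\in\mathcal{O}(\mathcal{H}_1\to\mathcal{H}_3\otimes\mathcal{H}_2),\ \frac{\Lambda+s\Theta}{1+s}\in\mathcal{G}\}$. *)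

theory Defs
  imports Complex_Main "HOL-Library.Extended_Real"
begin

text \<open>Operators on a finite-dimensional Hilbert space with orthonormal basis indexed by
  the finite type 'a are represented as matrices 'a \<Rightarrow> 'a \<Rightarrow> complex.\<close>

type_synonym 'a cmat = "'a \<Rightarrow> 'a \<Rightarrow> complex"

definition psd_on :: "'a set \<Rightarrow> 'a cmat \<Rightarrow> bool" where
  "psd_on S M \<longleftrightarrow> (\<forall>v :: 'a \<Rightarrow> complex.
     (\<Sum>x\<in>S. \<Sum>y\<in>S. cnj (v x) * M x y * v y) \<in> \<real> \<and>
     Re (\<Sum>x\<in>S. \<Sum>y\<in>S. cnj (v x) * M x y * v y) \<ge> 0)"

definition psd :: "('a::finite) cmat \<Rightarrow> bool" where
  "psd M \<longleftrightarrow> psd_on UNIV M"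

definition mtrace :: "('a::finite) cmat \<Rightarrow> complex" where
  "mtrace M = (\<Sum>a\<in>UNIV. M a a)"

definition lin_map :: "('a cmat \<Rightarrow> 'b cmat) \<Rightarrow> bool" where
  "lin_map \<Phi> \<longleftrightarrow>
     (\<forall>A B. \<Phi> (\<lambda>i j. A i j + B i j) = (\<lambda>i j. \<Phi> A i j + \<Phi> B i j)) \<and>
     (\<forall>c A. \<Phi> (\<lambda>i j. c * A i j) = (\<lambda>i j. c * \<Phi> A i j))"

text \<open>Ampliation id_n \<otimes> \<Phi>, the ancilla having basis {0..<n}.\<close>
definition amp :: "nat \<Rightarrow> ('a cmat \<Rightarrow> 'b cmat) \<Rightarrow> (nat \<times> 'a) cmat \<Rightarrow> (nat \<times> 'b) cmat" where
  "amp n \<Phi> X = (\<lambda>(k, b) (l, b'). if k < n \<and> l < n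
       then \<Phi> (\<lambda>a a'. X (k, a) (l, a')) b b' else 0)"

definition completely_positive :: "(('a::finite) cmat \<Rightarrow> ('b::finite) cmat) \<Rightarrow> bool" where
  "completely_positive \<Phi> \<longleftrightarrow> lin_map \<Phi> \<and>
     (\<forall>n X. psd_on ({..<n} \<times> UNIV) X \<longrightarrow> psd_on ({..<n} \<times> UNIV) (amp n \<Phi> X))"

definition cptn :: "(('a::finite) cmat \<Rightarrow> ('b::finite) cmat) \<Rightarrow> bool" where
  "cptn \<Phi> \<longleftrightarrow> completely_positive \<Phi> \<and>
     (\<forall>\<rho>. psd \<rho> \<longrightarrow> Re (mtrace (\<Phi> \<rho>)) \<le> Re (mtrace \<rho>))"

definition channel :: "(('a::finite) cmat \<Rightarrow> ('b::finite) cmat) \<Rightarrow> bool" where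
  "channel \<Phi> \<longleftrightarrow> completely_positive \<Phi> \<and> (\<forall>\<rho>. mtrace (\<Phi> \<rho>) = mtrace \<rho>)"

definition sum_maps :: "('c::finite \<Rightarrow> 'a cmat \<Rightarrow> 'b cmat) \<Rightarrow> 'a cmat \<Rightarrow> 'b cmat" where
  "sum_maps E = (\<lambda>\<rho> i j. \<Sum>k\<in>UNIV. E k \<rho> i j)"

text \<open>O^(m)(H1 -> H2): instruments with outcomes indexed by the finite type 'c, m = CARD('c).\<close>
definition instrument :: "('c::finite \<Rightarrow> ('a::finite) cmat \<Rightarrow> ('b::finite) cmat) \<Rightarrow> bool" where
  "instrument E \<longleftrightarrow> (\<forall>i. cptn (E i)) \<and> channel (sum_maps E)"

definition mix :: "real \<Rightarrow> ('a cmat \<Rightarrow> 'b cmat) \<Rightarrow> ('a cmat \<Rightarrow> 'b cmat) \<Rightarrow> 'a cmat \<Rightarrow> 'b cmat" where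
  "mix s A B = (\<lambda>\<rho> i j. (A \<rho> i j + complex_of_real s * B \<rho> i j) / complex_of_real (1 + s))"

text \<open>Generalized robustness of an instrument w.r.t. a set F of free CPTN maps
  (infimum in the extended reals; +\<infinity> if no s works).\<close>
definition rob_instr :: "(('a::finite) cmat \<Rightarrow> ('b::finite) cmat) set \<Rightarrow>
    ('c::finite \<Rightarrow> 'a cmat \<Rightarrow> 'b cmat) \<Rightarrow> ereal" where
  "rob_instr F E = Inf (ereal ` {s. s \<ge> 0 \<and>
     (\<exists>G :: 'c \<Rightarrow> 'a cmat \<Rightarrow> 'b cmat. instrument G \<and> (\<forall>i. mix s (E i) (G i) \<in> F))})"

definition rob_chan :: "(('a::finite) cmat \<Rightarrow> ('d::finite) cmat) set \<Rightarrow>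
    ('a cmat \<Rightarrow> 'd cmat) \<Rightarrow> ereal" where
  "rob_chan \<G> \<Lambda> = Inf (ereal ` {s. s \<ge> 0 \<and>
     (\<exists>\<Theta> :: 'a cmat \<Rightarrow> 'd cmat. channel \<Theta> \<and> mix s \<Lambda> \<Theta> \<in> \<G>)})"

text \<open>\<Lambda>_E(\<rho>) = \<Sum>_i |i><i| \<otimes> E_i(\<rho>), on H3 \<otimes> H2 with basis 'c \<times> 'b.\<close>
definition instr_channel :: "('c::finite \<Rightarrow> ('a::finite) cmat \<Rightarrow> ('b::finite) cmat) \<Rightarrow>
    'a cmat \<Rightarrow> ('c \<times> 'b) cmat" where
  "instr_channel E = (\<lambda>\<rho> (i, b) (j, b'). if i = j then E i \<rho> b b' else 0)"

definition free_instr_channels :: "(('a::finite) cmat \<Rightarrow> ('b::finite) cmat) set \<Rightarrow>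
    ('a cmat \<Rightarrow> ('c::finite \<times> 'b) cmat) set" where
  "free_instr_channels F = {instr_channel E' | E'.
     (\<forall>i. E' i \<in> F) \<and> channel (sum_maps E')}"

end

theory Submission
  imports Defs
begin

(* Both robustnesses are infima over the same set of weights s.  If an instrument G mixes E
   into free maps, then the channel Lambda_G mixes Lambda_E into a free channel, because
   Lambda commutes with mixing.  Conversely, if Lambda_E + s Theta = (1 + s) Lambda_E', then the
   diagonal blocks G_i rho = <i| Theta(rho) |i> of the channel Theta form an instrument, and
   comparing diagonal blocks gives E_i + s G_i = (1 + s) E'_i. *)

definition qform :: "'a set \<Rightarrow> 'a cmat \<Rightarrow> ('a \<Rightarrow> complex) \<Rightarrow> complex" where
  "qform S M v = (\<Sum>x\<in>S. \<Sum>y\<in>S. cnj (v x) * M x y * v y)"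

lemma psd_on_iff_qform: "psd_on S M \<longleftrightarrow> (\<forall>v. qform S M v \<in> \<real> \<and> Re (qform S M v) \<ge> 0)"
  unfolding psd_on_def qform_def by simp

lemma qform_cong:
  assumes "\<And>x y. x \<in> S \<Longrightarrow> y \<in> S \<Longrightarrow> M x y = M' x y" and "\<And>x. x \<in> S \<Longrightarrow> v x = w x"
  shows "qform S M v = qform S M' w"
  unfolding qform_def using assms by (auto intro!: sum.cong)

lemma qform_reindex:
  assumes "inj_on g T"
  shows "qform (g ` T) M v = qform T (\<lambda>x y. M (g x) (g y)) (v \<circ> g)"
  unfolding qform_def using assms by (simp add: sum.reindex)

lemma qform_mono_neutral:
  assumes "finite S" "T \<subseteq> S"
    and "\<And>x y. x \<in> S \<Longrightarrow> y \<in> S \<Longrightarrow> x \<notin> T \<or> y \<notin> T \<Longrightarrow> cnj (v x) * M x y * v y = 0"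
  shows "qform S M v = qform T M v"
proof -
  have "qform S M v = (\<Sum>x\<in>S. \<Sum>y\<in>T. cnj (v x) * M x y * v y)"
    unfolding qform_def
    by (intro sum.cong refl sum.mono_neutral_right) (use assms in auto)
  also have "\<dots> = qform T M v"
    unfolding qform_def
    by (rule sum.mono_neutral_right) (use assms finite_subset in \<open>auto intro!: sum.neutral\<close>)
  finally show ?thesis .
qed

lemma qform_add: "qform S (\<lambda>x y. M x y + N x y) v = qform S M v + qform S N v"
  unfolding qform_def by (simp add: algebra_simps sum.distrib)

lemma qform_scale: "qform S (\<lambda>x y. c * M x y) v = c * qform S M v"
  unfolding qform_def by (simp add: algebra_simps sum_distrib_left)

lemma psd_on_add: "psd_on S M \<Longrightarrow> psd_on S N \<Longrightarrow> psd_on S (\<lambda>x y. M x y + N x y)"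
  unfolding psd_on_iff_qform qform_add by (simp add: Reals_add)

lemma psd_on_scale:
  "psd_on S M \<Longrightarrow> a \<ge> 0 \<Longrightarrow> psd_on S (\<lambda>x y. complex_of_real a * M x y)"
  unfolding psd_on_iff_qform qform_scale by (simp add: Reals_mult)

lemma psd_on_compress:
  assumes "psd_on S M" "finite S" "inj_on g T" "g ` T \<subseteq> S"
  shows "psd_on T (\<lambda>x y. M (g x) (g y))"
  unfolding psd_on_iff_qform
proof
  fix v :: "'b \<Rightarrow> complex"
  define w where "w z = (if z \<in> g ` T then v (inv_into T g z) else 0)" for z
  have "qform T (\<lambda>x y. M (g x) (g y)) v = qform T (\<lambda>x y. M (g x) (g y)) (w \<circ> g)"
    by (rule qform_cong) (use assms(3) in \<open>auto simp: w_def\<close>)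
  also have "\<dots> = qform (g ` T) M w"
    by (rule qform_reindex[OF assms(3), symmetric])
  also have "\<dots> = qform S M w"
    by (rule qform_mono_neutral[symmetric]) (use assms(2,4) in \<open>auto simp: w_def\<close>)
  finally show "qform T (\<lambda>x y. M (g x) (g y)) v \<in> \<real> \<and> 0 \<le> Re (qform T (\<lambda>x y. M (g x) (g y)) v)"
    using assms(1) unfolding psd_on_iff_qform by metis
qed

lemma psd_on_embed:
  assumes "psd_on T N" "finite S" "inj_on g T" "g ` T \<subseteq> S"
    and "\<And>x y. x \<in> S \<Longrightarrow> y \<in> S \<Longrightarrow> x \<notin> g ` T \<or> y \<notin> g ` T \<Longrightarrow> M x y = 0"
    and "\<And>x y. x \<in> T \<Longrightarrow> y \<in> T \<Longrightarrow> M (g x) (g y) = N x y"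
  shows "psd_on S M"
  unfolding psd_on_iff_qform
proof
  fix v
  have "qform S M v = qform (g ` T) M v"
    by (rule qform_mono_neutral) (use assms(2,4,5) in auto)
  also have "\<dots> = qform T N (v \<circ> g)"
    unfolding qform_reindex[OF assms(3)] by (rule qform_cong) (use assms(6) in auto)
  finally show "qform S M v \<in> \<real> \<and> 0 \<le> Re (qform S M v)"
    using assms(1) unfolding psd_on_iff_qform by metis
qed

lemma psd_on_diag_nonneg:
  assumes "psd_on S M" "finite S" "p \<in> S"
  shows "Re (M p p) \<ge> 0"
proof -
  have "qform S M (\<lambda>x. if x = p then 1 else 0)
      = (\<Sum>x\<in>S. if x = p then (\<Sum>y\<in>S. if y = p then M x y else 0) else 0)"
    unfolding qform_def by (auto intro!: sum.cong)
  also have "\<dots> = M p p"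
    using assms(2,3) by simp
  finally have "qform S M (\<lambda>x. if x = p then 1 else 0) = M p p" .
  then show ?thesis
    using assms(1) unfolding psd_on_iff_qform by metis
qed

lemma psd_trace_nonneg: "psd (M :: ('a::finite) cmat) \<Longrightarrow> Re (mtrace M) \<ge> 0"
  unfolding psd_def mtrace_def Re_sum by (simp add: sum_nonneg psd_on_diag_nonneg)

lemma amp_apply [simp]:
  "amp n \<Phi> X (k, b) (l, b') = (if k < n \<and> l < n then \<Phi> (\<lambda>a a'. X (k, a) (l, a')) b b' else 0)"
  by (simp add: amp_def)

lemma completely_positive_zero: "completely_positive (\<lambda>(\<rho>::('a::finite) cmat) (i::'b::finite) j. 0)"
proof -
  have "amp n (\<lambda>(\<rho>::'a cmat) (i::'b) j. 0) X = (\<lambda>x y. 0)" for n X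
    by (auto simp: amp_def fun_eq_iff)
  then show ?thesis
    unfolding completely_positive_def lin_map_def psd_on_iff_qform qform_def by simp
qed

lemma completely_positive_add:
  assumes "completely_positive (A :: ('a::finite) cmat \<Rightarrow> ('b::finite) cmat)" "completely_positive B"
  shows "completely_positive (\<lambda>\<rho> i j. A \<rho> i j + B \<rho> i j)"
  unfolding completely_positive_def
proof (intro conjI allI impI)
  show "lin_map (\<lambda>\<rho> i j. A \<rho> i j + B \<rho> i j)"
    using assms unfolding completely_positive_def lin_map_def by (simp add: algebra_simps)
next
  fix n :: nat and X :: "(nat \<times> 'a) cmat"
  assume "psd_on ({..<n} \<times> UNIV) X"
  then have "psd_on ({..<n} \<times> UNIV) (\<lambda>x y. amp n A X x y + amp n B X x y)"
    using assms unfolding completely_positive_def by (simp add: psd_on_add)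
  moreover have "(\<lambda>x y. amp n A X x y + amp n B X x y) = amp n (\<lambda>\<rho> i j. A \<rho> i j + B \<rho> i j) X"
    by (auto simp: amp_def fun_eq_iff)
  ultimately show "psd_on ({..<n} \<times> UNIV) (amp n (\<lambda>\<rho> i j. A \<rho> i j + B \<rho> i j) X)"
    by simp
qed

lemma completely_positive_scale:
  assumes "completely_positive (A :: ('a::finite) cmat \<Rightarrow> ('b::finite) cmat)" "a \<ge> 0"
  shows "completely_positive (\<lambda>\<rho> i j. complex_of_real a * A \<rho> i j)"
  unfolding completely_positive_def
proof (intro conjI allI impI)
  show "lin_map (\<lambda>\<rho> i j. complex_of_real a * A \<rho> i j)"
    using assms unfolding completely_positive_def lin_map_def by (simp add: algebra_simps)
next
  fix n :: nat and X :: "(nat \<times> 'a) cmat"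
  assume "psd_on ({..<n} \<times> UNIV) X"
  then have "psd_on ({..<n} \<times> UNIV) (\<lambda>x y. complex_of_real a * amp n A X x y)"
    using assms unfolding completely_positive_def by (simp add: psd_on_scale)
  moreover have "(\<lambda>x y. complex_of_real a * amp n A X x y) = amp n (\<lambda>\<rho> i j. complex_of_real a * A \<rho> i j) X"
    by (auto simp: amp_def fun_eq_iff)
  ultimately show "psd_on ({..<n} \<times> UNIV) (amp n (\<lambda>\<rho> i j. complex_of_real a * A \<rho> i j) X)"
    by simp
qed

lemma completely_positive_sum:
  assumes "\<And>c. completely_positive (\<Phi> c :: ('a::finite) cmat \<Rightarrow> ('b::finite) cmat)" "finite S"
  shows "completely_positive (\<lambda>\<rho> i j. \<Sum>c\<in>S. \<Phi> c \<rho> i j)"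
  using assms(2)
proof (induction S rule: finite_induct)
  case empty
  then show ?case using completely_positive_zero by simp
next
  case (insert c S)
  then show ?case using completely_positive_add[OF assms(1)[of c] insert.IH] by simp
qed

lemma completely_positive_sum_maps:
  "(\<And>c. completely_positive (\<Phi> c)) \<Longrightarrow> completely_positive (sum_maps \<Phi>)"
  unfolding sum_maps_def by (rule completely_positive_sum) simp_all

lemma mix_eq_convex_comb:
  "s \<ge> 0 \<Longrightarrow> mix s A B = (\<lambda>\<rho> i j. complex_of_real (1 / (1 + s)) * A \<rho> i j
     + complex_of_real (s / (1 + s)) * B \<rho> i j)"
  unfolding mix_def by (auto simp: fun_eq_iff add_divide_distrib)

lemma completely_positive_mix:
  "completely_positive A \<Longrightarrow> completely_positive B \<Longrightarrow> s \<ge> 0 \<Longrightarrow> completely_positive (mix s A B)"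
  by (simp only: mix_eq_convex_comb) (intro completely_positive_add completely_positive_scale; simp)

lemma completely_positive_compress:
  assumes "completely_positive (\<Phi> :: ('a::finite) cmat \<Rightarrow> ('d::finite) cmat)" "inj (h :: 'b::finite \<Rightarrow> 'd)"
  shows "completely_positive (\<lambda>\<rho> b b'. \<Phi> \<rho> (h b) (h b'))"
  unfolding completely_positive_def
proof (intro conjI allI impI)
  show "lin_map (\<lambda>\<rho> b b'. \<Phi> \<rho> (h b) (h b'))"
    using assms(1) unfolding completely_positive_def lin_map_def by simp
next
  fix n :: nat and X :: "(nat \<times> 'a) cmat"
  assume "psd_on ({..<n} \<times> UNIV) X"
  then have "psd_on ({..<n} \<times> UNIV) (amp n \<Phi> X)"
    using assms(1) unfolding completely_positive_def by auto
  then have "psd_on ({..<n} \<times> UNIV) (\<lambda>x y. amp n \<Phi> X (map_prod id h x) (map_prod id h y))"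
    by (rule psd_on_compress) (use assms(2) in \<open>auto simp: inj_on_def inj_def\<close>)
  moreover have "(\<lambda>x y. amp n \<Phi> X (map_prod id h x) (map_prod id h y)) = amp n (\<lambda>\<rho> b b'. \<Phi> \<rho> (h b) (h b')) X"
    by (auto simp: fun_eq_iff)
  ultimately show "psd_on ({..<n} \<times> UNIV) (amp n (\<lambda>\<rho> b b'. \<Phi> \<rho> (h b) (h b')) X)"
    by simp
qed

lemma completely_positive_block:
  assumes "completely_positive (\<Psi> :: ('a::finite) cmat \<Rightarrow> ('b::finite) cmat)"
  shows "completely_positive (\<lambda>\<rho> (x::'c::finite \<times> 'b) y.
     if fst x = c \<and> fst y = c then \<Psi> \<rho> (snd x) (snd y) else 0)"
    (is "completely_positive ?B")
  unfolding completely_positive_def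
proof (intro conjI allI impI)
  show "lin_map ?B"
    using assms unfolding completely_positive_def lin_map_def by (auto simp: fun_eq_iff)
next
  fix n :: nat and X :: "(nat \<times> 'a) cmat"
  assume "psd_on ({..<n} \<times> UNIV) X"
  then have "psd_on ({..<n} \<times> UNIV) (amp n \<Psi> X)"
    using assms unfolding completely_positive_def by auto
  then show "psd_on ({..<n} \<times> UNIV) (amp n ?B X)"
    by (rule psd_on_embed[where g = "map_prod id (Pair c)"])
      (auto simp: inj_on_def image_iff amp_def split: prod.splits)
qed

lemma completely_positive_psd:
  assumes "completely_positive (\<Phi> :: ('a::finite) cmat \<Rightarrow> ('b::finite) cmat)" "psd \<rho>"
  shows "psd (\<Phi> \<rho>)"
proof -
  define X :: "(nat \<times> 'a) cmat" where "X x y = \<rho> (snd x) (snd y)" for x y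
  have "psd_on ({..<1} \<times> UNIV) X"
    by (rule psd_on_embed[where g = "Pair 0" and T = UNIV and N = \<rho>])
      (use assms(2) in \<open>auto simp: psd_def X_def inj_on_def\<close>)
  then have "psd_on ({..<1} \<times> UNIV) (amp 1 \<Phi> X)"
    using assms(1) unfolding completely_positive_def by auto
  then have "psd_on UNIV (\<lambda>b b'. amp 1 \<Phi> X (0, b) (0, b'))"
    by (rule psd_on_compress) (auto simp: inj_on_def)
  then show ?thesis
    by (simp add: psd_def X_def)
qed

lemma sum_UNIV_prod:
  "(\<Sum>x\<in>(UNIV :: ('c::finite \<times> 'b::finite) set). f x) = (\<Sum>i\<in>UNIV. \<Sum>b\<in>UNIV. f (i, b))"
  by (simp add: sum.cartesian_product UNIV_Times_UNIV[symmetric] del: UNIV_Times_UNIV)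

lemma mtrace_sum_maps: "mtrace (sum_maps G \<rho>) = (\<Sum>i\<in>UNIV. mtrace (G i \<rho>))"
  unfolding mtrace_def sum_maps_def by (rule sum.swap)

lemma mtrace_instr_channel: "mtrace (instr_channel G \<rho>) = mtrace (sum_maps G \<rho>)"
  unfolding mtrace_sum_maps unfolding mtrace_def instr_channel_def sum_UNIV_prod by simp

lemma mtrace_sum_diagonal_blocks:
  "mtrace (sum_maps (\<lambda>i \<rho> b b'. \<Theta> \<rho> (i, b) (i, b')) \<rho>) = mtrace (\<Theta> \<rho>)"
  unfolding mtrace_sum_maps unfolding mtrace_def sum_UNIV_prod by simp

lemma mtrace_mix:
  "mtrace (mix s A B \<rho>) = (mtrace (A \<rho>) + complex_of_real s * mtrace (B \<rho>)) / complex_of_real (1 + s)"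
  unfolding mtrace_def mix_def
  by (simp add: sum_divide_distrib[symmetric] sum.distrib sum_distrib_left)

lemma channel_mix:
  assumes "channel A" "channel B" "s \<ge> 0"
  shows "channel (mix s A B)"
proof -
  have "complex_of_real (1 + s) \<noteq> 0"
    by (simp only: of_real_eq_0_iff) (use assms(3) in linarith)
  then have "mtrace (mix s A B \<rho>) = mtrace \<rho>" for \<rho>
    using assms(1,2) unfolding mtrace_mix channel_def by (simp add: field_simps)
  then show ?thesis
    using assms completely_positive_mix unfolding channel_def by blast
qed

lemma sum_maps_mix: "sum_maps (\<lambda>i. mix s (E i) (G i)) = mix s (sum_maps E) (sum_maps G)"
  unfolding sum_maps_def mix_def
  by (simp add: fun_eq_iff sum_divide_distrib[symmetric] sum.distrib sum_distrib_left)

lemma instr_channel_mix: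
  "mix s (instr_channel E) (instr_channel G) = instr_channel (\<lambda>i. mix s (E i) (G i))"
  by (auto simp: fun_eq_iff mix_def instr_channel_def)

lemma instr_channel_eq_sum_blocks:
  "instr_channel G = sum_maps (\<lambda>c \<rho> x y. if fst x = c \<and> fst y = c then G c \<rho> (snd x) (snd y) else 0)"
proof -
  have "instr_channel G \<rho> x y = (\<Sum>c\<in>UNIV. if fst x = c \<and> fst y = c then G c \<rho> (snd x) (snd y) else 0)"
    for \<rho> x y
    by (cases "fst x = fst y"; cases x; cases y) (auto simp: instr_channel_def intro!: sum.neutral)
  then show ?thesis
    unfolding sum_maps_def by (simp add: fun_eq_iff)
qed

lemma channel_instr_channel:
  assumes "instrument G"
  shows "channel (instr_channel G)"
proof -
  have "completely_positive (G c)" for c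
    using assms unfolding instrument_def cptn_def by auto
  then have "completely_positive (instr_channel G)"
    unfolding instr_channel_eq_sum_blocks by (intro completely_positive_sum_maps completely_positive_block)
  then show ?thesis
    using assms unfolding channel_def instrument_def mtrace_instr_channel by simp
qed

lemma instrument_diagonal_blocks:
  assumes "channel (\<Theta> :: ('a::finite) cmat \<Rightarrow> ('c::finite \<times> 'b::finite) cmat)"
  shows "instrument (\<lambda>i \<rho> b b'. \<Theta> \<rho> (i, b) (i, b'))" (is "instrument ?G")
proof -
  have cp: "completely_positive (?G i)" for i
    using assms completely_positive_compress[of \<Theta> "Pair i"] by (simp add: channel_def inj_on_def)
  have trace: "(\<Sum>j\<in>UNIV. mtrace (?G j \<rho>)) = mtrace \<rho>" for \<rho>
    using assms mtrace_sum_diagonal_blocks[of \<Theta> \<rho>] unfolding channel_def mtrace_sum_maps by simp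
  have "Re (mtrace (?G i \<rho>)) \<le> Re (mtrace \<rho>)" if "psd \<rho>" for i \<rho>
  proof -
    have "Re (mtrace (?G j \<rho>)) \<ge> 0" for j
      using psd_trace_nonneg[OF completely_positive_psd[OF cp that]] .
    then have "Re (mtrace (?G i \<rho>)) \<le> (\<Sum>j\<in>UNIV. Re (mtrace (?G j \<rho>)))"
      by (intro member_le_sum) auto
    then show ?thesis
      using trace[of \<rho>] by (simp add: Re_sum[symmetric])
  qed
  then show ?thesis
    using cp completely_positive_sum_maps[OF cp] trace
    unfolding instrument_def cptn_def channel_def mtrace_sum_maps by simp
qed

lemma instr_channel_mix_free:
  assumes "instrument E" "instrument G" "s \<ge> 0" "\<forall>i. mix s (E i) (G i) \<in> F"
  shows "mix s (instr_channel E) (instr_channel G) \<in> free_instr_channels F"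
proof -
  have "channel (sum_maps (\<lambda>i. mix s (E i) (G i)))"
    using assms(1-3) unfolding sum_maps_mix instrument_def by (simp add: channel_mix)
  then show ?thesis
    unfolding instr_channel_mix free_instr_channels_def using assms(4) by blast
qed

lemma diagonal_blocks_mix_free:
  assumes "mix s (instr_channel E) \<Theta> \<in> free_instr_channels F"
  shows "mix s (E i) (\<lambda>\<rho> b b'. \<Theta> \<rho> (i, b) (i, b')) \<in> F"
proof -
  obtain E' where "\<forall>i. E' i \<in> F" and E': "mix s (instr_channel E) \<Theta> = instr_channel E'"
    using assms unfolding free_instr_channels_def by auto
  moreover have "mix s (E i) (\<lambda>\<rho> b b'. \<Theta> \<rho> (i, b) (i, b')) = E' i"
  proof (intro ext)
    fix \<rho> b b'
    show "mix s (E i) (\<lambda>\<rho> b b'. \<Theta> \<rho> (i, b) (i, b')) \<rho> b b' = E' i \<rho> b b'"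
      using fun_cong[OF fun_cong[OF fun_cong[OF E', of \<rho>], of "(i, b)"], of "(i, b')"]
      by (simp add: mix_def instr_channel_def)
  qed
  ultimately show ?thesis
    by simp
qed

theorem theorem16:
  fixes F :: "(('a::finite) cmat \<Rightarrow> ('b::finite) cmat) set"
    and E :: "'c::finite \<Rightarrow> 'a cmat \<Rightarrow> 'b cmat"
  assumes "F \<subseteq> {\<Phi>. cptn \<Phi>}"
    and "instrument E"
  shows "rob_instr F E =
         rob_chan (free_instr_channels F :: ('a cmat \<Rightarrow> ('c \<times> 'b) cmat) set) (instr_channel E)"
proof -
  have "{s. s \<ge> 0 \<and> (\<exists>G :: 'c \<Rightarrow> 'a cmat \<Rightarrow> 'b cmat. instrument G \<and> (\<forall>i. mix s (E i) (G i) \<in> F))}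
      = {s. s \<ge> 0 \<and> (\<exists>\<Theta> :: 'a cmat \<Rightarrow> ('c \<times> 'b) cmat. channel \<Theta> \<and>
            mix s (instr_channel E) \<Theta> \<in> free_instr_channels F)}"
  proof (intro Collect_cong conj_cong refl iffI; elim exE conjE)
    fix s G assume "s \<ge> 0" "instrument G" "\<forall>i. mix s (E i) (G i) \<in> F"
    then show "\<exists>\<Theta>. channel \<Theta> \<and> mix s (instr_channel E) \<Theta> \<in> free_instr_channels F"
      using assms(2) channel_instr_channel instr_channel_mix_free by blast
  next
    fix s \<Theta> assume "channel \<Theta>" "mix s (instr_channel E) \<Theta> \<in> free_instr_channels F"
    then show "\<exists>G. instrument G \<and> (\<forall>i. mix s (E i) (G i) \<in> F)"
      using instrument_diagonal_blocks diagonal_blocks_mix_free by blast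
  qed
  then show ?thesis
    unfolding rob_instr_def rob_chan_def by simp
qed

end
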